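(* Let $\overrightarrow{W}$ and $\overrightarrow{W}'$ be two Morse sequences on the same simplicial complex $K$, with reference maps $\curlywedge,\curlywedge'$ and coreference maps $\curlyvee,\curlyvee'$ respectively. If $\overrightarrow{W}$ and $\overrightarrow{W}'$ are equivalent, then $\curlywedge=\curlywedge'$ and $\curlyvee=\curlyvee'$.
   Context: A simplicial complex $K$ is a finite collection of non-empty finite sets closed under taking non-empty subsets; $\dim\sigma=|\sigma|-1$, $K^{(p)}$ the set of $p$-simplices. A pair $(\sigma,\tau)$ with $\sigma\subsetneq\tau$ is a free pair for $K$ if $\tau$ is the only simplex other than $\sigma$ containing $\sigma$; $K$ is then an elementary expansion of $K\setminus\{\sigma,\tau\}$. If $\nu$ is a facet (maximal simplex) of $K$, $K$ is an elementary filling of $K\setminus\{\nu\}$. A Morse sequence on $K$ is a sequence $\langle\emptyset=K_0,\dots,K_k=K\rangle$ with each $K_i$ an elementary expansion or filling of $K_{i-1}$; simplices added by fillings are critical; for an expansion $K_i=K_{i-1}\cup\{\sigma,\tau\}$, $\sigma\subset\tau$, $(\sigma,\tau)$ is a regular pair, $\sigma$ lower regular, $\tau$ upper regular. The gradient vector field of a Morse sequence is the set of its regular pairs; two Morse sequences on $K$ are equivalent if they have the same gradient vector field. $K[p]$ is the $\mathbb{Z}_2$-vector space of subsets of $K^{(p)}$ (sum = symmetric difference, $0=\emptyset$); $\partial(\sigma)=\{\tau\in K^{(p-1)}:\tau\subset\sigma\}$, $\delta(\sigma)=\{\tau\in K^{(p+1)}:\sigma\subset\tau\}$. The reference map $\curlywedge$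 of a Morse sequence is the unique map assigning to each $p$-simplex a set of critical $p$-simplices, extended linearly (mod 2) to chains, with $\curlywedge(\nu)=\{\nu\}$ for critical $\nu$ and $\curlywedge(\tau)=0=\curlywedge(\partial(\tau))$ for upper regular $\tau$; the coreference map $\curlyvee$ is the unique such map with $\curlyvee(\nu)=\{\nu\}$ for critical $\nu$ and $\curlyvee(\sigma)=0=\curlyvee(\delta(\sigma))$ for lower regular $\sigma$. *)

theory Defs
  imports Main
begin

text \<open>Simplices are finite non-empty sets of vertices of type 'a; a complex is a
  set of simplices. A p-simplex has cardinality p+1.\<close>

definition simplicial_complex :: "'a set set \<Rightarrow> bool" where
  "simplicial_complex K \<longleftrightarrow> finite K \<and>
     (\<forall>\<sigma>\<in>K. \<sigma> \<noteq> {} \<and> finite \<sigma>) \<and>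
     (\<forall>\<sigma>\<in>K. \<forall>\<tau>. \<tau> \<subseteq> \<sigma> \<and> \<tau> \<noteq> {} \<longrightarrow> \<tau> \<in> K)"

definition free_pair :: "'a set set \<Rightarrow> 'a set \<Rightarrow> 'a set \<Rightarrow> bool" where
  "free_pair K \<sigma> \<tau> \<longleftrightarrow> \<sigma> \<in> K \<and> \<tau> \<in> K \<and> \<sigma> \<subset> \<tau> \<and>
     (\<forall>\<nu>\<in>K. \<sigma> \<subseteq> \<nu> \<longrightarrow> \<nu> = \<sigma> \<or> \<nu> = \<tau>)"

definition facet :: "'a set set \<Rightarrow> 'a set \<Rightarrow> bool" where
  "facet K \<nu> \<longleftrightarrow> \<nu> \<in> K \<and> (\<forall>\<mu>\<in>K. \<nu> \<subseteq> \<mu> \<longrightarrow> \<mu> = \<nu>)"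

definition expansion_by :: "'a set set \<Rightarrow> 'a set set \<Rightarrow> 'a set \<Rightarrow> 'a set \<Rightarrow> bool" where
  "expansion_by L K \<sigma> \<tau> \<longleftrightarrow> free_pair K \<sigma> \<tau> \<and> L = K - {\<sigma>, \<tau>}"

definition filling_by :: "'a set set \<Rightarrow> 'a set set \<Rightarrow> 'a set \<Rightarrow> bool" where
  "filling_by L K \<nu> \<longleftrightarrow> facet K \<nu> \<and> L = K - {\<nu>}"

definition morse_seq :: "'a set set \<Rightarrow> 'a set set list \<Rightarrow> bool" where
  "morse_seq K W \<longleftrightarrow> simplicial_complex K \<and> W \<noteq> [] \<and> hd W = {} \<and> last W = K \<and>
     (\<forall>i < length W. simplicial_complex (W ! i)) \<and>
     (\<forall>i. Suc i < length W \<longrightarrow>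
        (\<exists>\<sigma> \<tau>. expansion_by (W ! i) (W ! Suc i) \<sigma> \<tau>) \<or>
        (\<exists>\<nu>. filling_by (W ! i) (W ! Suc i) \<nu>))"

definition gradient :: "'a set set list \<Rightarrow> ('a set \<times> 'a set) set" where
  "gradient W = {(\<sigma>, \<tau>). \<exists>i. Suc i < length W \<and> expansion_by (W ! i) (W ! Suc i) \<sigma> \<tau>}"

definition critical :: "'a set set list \<Rightarrow> 'a set set" where
  "critical W = {\<nu>. \<exists>i. Suc i < length W \<and> filling_by (W ! i) (W ! Suc i) \<nu>}"

definition upper_regular :: "'a set set list \<Rightarrow> 'a set \<Rightarrow> bool" where
  "upper_regular W \<tau> \<longleftrightarrow> (\<exists>\<sigma>. (\<sigma>, \<tau>) \<in> gradient W)"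

definition lower_regular :: "'a set set list \<Rightarrow> 'a set \<Rightarrow> bool" where
  "lower_regular W \<sigma> \<longleftrightarrow> (\<exists>\<tau>. (\<sigma>, \<tau>) \<in> gradient W)"

definition equivalent_ms :: "'a set set list \<Rightarrow> 'a set set list \<Rightarrow> bool" where
  "equivalent_ms W W' \<longleftrightarrow> gradient W = gradient W'"

text \<open>Boundary and coboundary (Z_2 chains are sets of simplices).\<close>
definition bd :: "'a set set \<Rightarrow> 'a set \<Rightarrow> 'a set set" where
  "bd K \<sigma> = {\<tau>\<in>K. \<tau> \<subseteq> \<sigma> \<and> card \<tau> + 1 = card \<sigma>}"

definition cobd :: "'a set set \<Rightarrow> 'a set \<Rightarrow> 'a set set" where
  "cobd K \<sigma> = {\<tau>\<in>K. \<sigma> \<subseteq> \<tau> \<and> card \<tau> = card \<sigma> + 1}"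

text \<open>Linear (mod 2) extension of a map on simplices to finite chains:
  symmetric difference of the images.\<close>
definition chain_ext :: "('a set \<Rightarrow> 'a set set) \<Rightarrow> 'a set set \<Rightarrow> 'a set set" where
  "chain_ext f c = {\<nu>. odd (card {\<sigma>\<in>c. \<nu> \<in> f \<sigma>})}"

text \<open>Characterising properties; maps are normalised to be empty off K.\<close>
definition is_reference_map :: "'a set set \<Rightarrow> 'a set set list \<Rightarrow> ('a set \<Rightarrow> 'a set set) \<Rightarrow> bool" where
  "is_reference_map K W f \<longleftrightarrow>
     (\<forall>\<sigma>. \<sigma> \<notin> K \<longrightarrow> f \<sigma> = {}) \<and>
     (\<forall>\<sigma>\<in>K. f \<sigma> \<subseteq> {\<nu>\<in>critical W. card \<nu> = card \<sigma>}) \<and>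
     (\<forall>\<nu>\<in>critical W. f \<nu> = {\<nu>}) \<and>
     (\<forall>\<tau>\<in>K. upper_regular W \<tau> \<longrightarrow> f \<tau> = {} \<and> chain_ext f (bd K \<tau>) = {})"

definition is_coreference_map :: "'a set set \<Rightarrow> 'a set set list \<Rightarrow> ('a set \<Rightarrow> 'a set set) \<Rightarrow> bool" where
  "is_coreference_map K W f \<longleftrightarrow>
     (\<forall>\<sigma>. \<sigma> \<notin> K \<longrightarrow> f \<sigma> = {}) \<and>
     (\<forall>\<sigma>\<in>K. f \<sigma> \<subseteq> {\<nu>\<in>critical W. card \<nu> = card \<sigma>}) \<and>
     (\<forall>\<nu>\<in>critical W. f \<nu> = {\<nu>}) \<and>
     (\<forall>\<sigma>\<in>K. lower_regular W \<sigma> \<longrightarrow> f \<sigma> = {} \<and> chain_ext f (cobd K \<sigma>) = {})"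

definition reference_map :: "'a set set \<Rightarrow> 'a set set list \<Rightarrow> 'a set \<Rightarrow> 'a set set" where
  "reference_map K W = (THE f. is_reference_map K W f)"

definition coreference_map :: "'a set set \<Rightarrow> 'a set set list \<Rightarrow> 'a set \<Rightarrow> 'a set set" where
  "coreference_map K W = (THE f. is_coreference_map K W f)"

end

theory Submission
  imports Defs
begin

text \<open>The reference and coreference maps are characterised by conditions that involve the
  Morse sequence only through its critical simplices and its regular pairs. The regular pairs
  form the gradient vector field, and the critical simplices are exactly the simplices of K
  occurring in no regular pair, because every simplex of K is added at exactly one step of the
  sequence. So equivalent Morse sequences have the same characterising conditions, hence the
  same maps.\<close>

lemma morse_seq_step_subset:
  assumes "morse_seq K W" "Suc i < length W"
  shows "W ! i \<subseteq> W ! Suc i"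
  using assms unfolding morse_seq_def expansion_by_def filling_by_def by blast

lemma morse_seq_mono:
  assumes "morse_seq K W" "i \<le> j" "j < length W"
  shows "W ! i \<subseteq> W ! j"
  by (rule lift_Suc_mono_le_ivl[where N = "{n. Suc n < length W}"])
    (use assms morse_seq_step_subset in auto)

lemma morse_seq_nth_last:
  assumes "morse_seq K W"
  shows "W ! (length W - 1) = K"
  using assms last_conv_nth unfolding morse_seq_def by metis

lemma morse_seq_nth_subset:
  assumes "morse_seq K W" "j < length W"
  shows "W ! j \<subseteq> K"
  using morse_seq_mono[OF assms(1), of j "length W - 1"] morse_seq_nth_last[OF assms(1)] assms(2)
  by simp

lemma morse_seq_added_at_unique_step:
  assumes "morse_seq K W" "Suc i < length W" "Suc j < length W"
    and "x \<in> W ! Suc i" "x \<notin> W ! i" "x \<in> W ! Suc j" "x \<notin> W ! j"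
  shows "i = j"
proof (rule ccontr)
  assume "i \<noteq> j"
  then have "Suc i \<le> j \<or> Suc j \<le> i" by auto
  then show False
    using morse_seq_mono[OF assms(1), of "Suc i" j] morse_seq_mono[OF assms(1), of "Suc j" i] assms
    by auto
qed

lemma morse_seq_nth_subset_critical_or_paired:
  assumes "morse_seq K W" "k < length W"
  shows "W ! k \<subseteq> critical W \<union> fst ` gradient W \<union> snd ` gradient W"
  using assms(2)
proof (induction k)
  case 0
  then show ?case using assms(1) hd_conv_nth unfolding morse_seq_def by fastforce
next
  case (Suc k)
  then have IH: "W ! k \<subseteq> critical W \<union> fst ` gradient W \<union> snd ` gradient W" by simp
  from assms(1) Suc.prems consider
      \<sigma> \<tau> where "expansion_by (W ! k) (W ! Suc k) \<sigma> \<tau>"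
    | \<nu> where "filling_by (W ! k) (W ! Suc k) \<nu>"
    unfolding morse_seq_def by blast
  then show ?case
  proof cases
    case (1 \<sigma> \<tau>)
    then have "(\<sigma>, \<tau>) \<in> gradient W" using Suc.prems unfolding gradient_def by blast
    moreover have "W ! Suc k \<subseteq> W ! k \<union> {\<sigma>, \<tau>}" using 1 unfolding expansion_by_def by blast
    ultimately show ?thesis using IH by force
  next
    case (2 \<nu>)
    then have "\<nu> \<in> critical W" using Suc.prems unfolding critical_def by blast
    moreover have "W ! Suc k \<subseteq> W ! k \<union> {\<nu>}" using 2 unfolding filling_by_def by blast
    ultimately show ?thesis using IH by blast
  qed
qed

lemma critical_not_in_gradient_pair:
  assumes "morse_seq K W" "\<nu> \<in> critical W" "(\<sigma>, \<tau>) \<in> gradient W"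
  shows "\<nu> \<noteq> \<sigma> \<and> \<nu> \<noteq> \<tau>"
proof (rule ccontr)
  assume paired: "\<not> (\<nu> \<noteq> \<sigma> \<and> \<nu> \<noteq> \<tau>)"
  obtain i where i: "Suc i < length W" "filling_by (W ! i) (W ! Suc i) \<nu>"
    using assms(2) unfolding critical_def by blast
  obtain j where j: "Suc j < length W" "expansion_by (W ! j) (W ! Suc j) \<sigma> \<tau>"
    using assms(3) unfolding gradient_def by blast
  have "\<nu> \<in> W ! Suc i" "\<nu> \<notin> W ! i"
    using i unfolding filling_by_def facet_def by auto
  moreover have "\<nu> \<in> W ! Suc j" "\<nu> \<notin> W ! j"
    using j paired unfolding expansion_by_def free_pair_def by auto
  ultimately have "i = j"
    using morse_seq_added_at_unique_step[OF assms(1) i(1) j(1)] by blast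
  then have "W ! Suc i - {\<nu>} = W ! Suc i - {\<sigma>, \<tau>}" "\<sigma> \<in> W ! Suc i" "\<tau> \<in> W ! Suc i" "\<sigma> \<noteq> \<tau>"
    using i j unfolding filling_by_def expansion_by_def free_pair_def by auto
  then show False by blast
qed

lemma critical_eq_unpaired:
  assumes "morse_seq K W"
  shows "critical W = K - (fst ` gradient W \<union> snd ` gradient W)"
proof
  show "K - (fst ` gradient W \<union> snd ` gradient W) \<subseteq> critical W"
    using morse_seq_nth_subset_critical_or_paired[OF assms, of "length W - 1"]
      morse_seq_nth_last[OF assms] assms
    unfolding morse_seq_def by auto
  have "critical W \<subseteq> K"
    using morse_seq_nth_subset[OF assms] unfolding critical_def filling_by_def facet_def by blast
  then show "critical W \<subseteq> K - (fst ` gradient W \<union> snd ` gradient W)"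
    using critical_not_in_gradient_pair[OF assms] by fastforce
qed

theorem proposition3:
  fixes K :: "'a set set" and W W' :: "'a set set list"
  assumes "morse_seq K W" and "morse_seq K W'" and "equivalent_ms W W'"
  shows "reference_map K W = reference_map K W' \<and>
         coreference_map K W = coreference_map K W'"
proof -
  have gradient: "gradient W = gradient W'"
    using assms(3) unfolding equivalent_ms_def .
  then have critical: "critical W = critical W'"
    using critical_eq_unpaired[OF assms(1)] critical_eq_unpaired[OF assms(2)] by simp
  have regular: "upper_regular W = upper_regular W'" "lower_regular W = lower_regular W'"
    using gradient unfolding upper_regular_def lower_regular_def by auto
  have "is_reference_map K W = is_reference_map K W'"
    "is_coreference_map K W = is_coreference_map K W'"
    unfolding is_reference_map_def is_coreference_map_def critical regular by (rule refl)+
  then show ?thesis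
    unfolding reference_map_def coreference_map_def by simp
qed

end
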